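(* Let $n\ge 6$ and let $\mathcal{F}$ be a finite set of graphs. Let $c:\mathcal{G}_n\to\{0,1\}$ be a concept such that, for all $T\ge0$, the graphs of $\mathcal{G}_n$ are not linearly separable under $\overline{\phi^{(T)}_{\mathsf{WL}}}$ with respect to $c$. Assume that every $G\in\mathcal{G}_n$ with $c(G)=0$ has at least one vertex contained in a subgraph of $G$ isomorphic to a graph in $\mathcal{F}$, while no graph $G$ with $c(G)=1$ has such a vertex. Then, for every $T\ge 0$, the graphs of $\mathcal{G}_n$ are linearly separable under $\overline{\phi^{(T)}_{\mathsf{WL},\mathcal{F}}}$ with respect to $c$.
   Context: $\mathcal{G}_n$ is the set of (unlabeled, simple, undirected) graphs on $n$ vertices; "subgraph" means induced subgraph $G[X]$, $X\subseteq V(G)$. $1$-WL: $C^1_0$ constant, $C^1_t(v)=\mathsf{RELABEL}(C^1_{t-1}(v),\{\!\{C^1_{t-1}(u):u\in N(v)\}\!\})$ with a fixed injective $\mathsf{RELABEL}$ shared by all graphs. $1$-WL$_{\mathcal{F}}$: same update with initial colour $(\ell_F(v))_{F\in\mathcal{F}}$, $\ell_F(v)=1$ if $v$ lies in some $X$ with $G[X]$ isomorphic to $F$, else $0$. $\phi_t(G)$ (resp. $\phi_{\mathcal{F},t}(G)$) counts the vertices of $G$ of each colour occurring at round $t$ over $\mathcal{G}_n$; $\phi^{(T)}_{\mathsf{WL}}$, $\phi^{(T)}_{\mathsf{WL},\mathcal{F}}$ are the concatenations over rounds $0,\dots,T$, and the bar denotes normalisation to unit Euclidean norm. Linearly separable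 with respect to $c$: there exist $\mathbf{w},b$ with $\mathbf{w}^\top\mathbf{x}_G+b>0$ when $c(G)=1$ and $<0$ when $c(G)=0$, $\mathbf{x}_G$ the feature vector of $G$. *)

theory Defs
  imports Complex_Main "HOL-Library.Multiset"
begin

text \<open>A labelled simple graph on vertex set {0..<n}: an adjacency predicate.
  Unlabelled graphs are handled by requiring the concept to be isomorphism invariant.\<close>
type_synonym graph = "nat \<Rightarrow> nat \<Rightarrow> bool"

definition wf_graph :: "nat \<Rightarrow> graph \<Rightarrow> bool" where
  "wf_graph n E \<longleftrightarrow> (\<forall>u v. E u v \<longrightarrow> u < n \<and> v < n) \<and> (\<forall>u v. E u v \<longrightarrow> E v u) \<and> (\<forall>v. \<not> E v v)"

definition graphs :: "nat \<Rightarrow> graph set" where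
  "graphs n = {E. wf_graph n E}"

definition graph_iso :: "nat \<Rightarrow> graph \<Rightarrow> graph \<Rightarrow> bool" where
  "graph_iso n G H \<longleftrightarrow> (\<exists>f. bij_betw f {0..<n} {0..<n} \<and>
      (\<forall>u<n. \<forall>v<n. G u v \<longleftrightarrow> H (f u) (f v)))"

definition in_induced_copy :: "nat \<Rightarrow> graph \<Rightarrow> nat \<Rightarrow> graph \<Rightarrow> nat \<Rightarrow> bool" where
  "in_induced_copy k H n G v \<longleftrightarrow> (\<exists>f. inj_on f {0..<k} \<and> f ` {0..<k} \<subseteq> {0..<n} \<and>
      v \<in> f ` {0..<k} \<and> (\<forall>i<k. \<forall>j<k. H i j \<longleftrightarrow> G (f i) (f j)))"

text \<open>Initial label vector (l_F(v))_{F in Fam}, as a function on graphs (indices outside Fam are False).\<close>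
definition sub_label :: "(nat \<times> graph) set \<Rightarrow> nat \<Rightarrow> graph \<Rightarrow> nat \<Rightarrow> (nat \<times> graph) \<Rightarrow> bool" where
  "sub_label Fam n G v = (\<lambda>F. F \<in> Fam \<and> in_induced_copy (fst F) (snd F) n G v)"

text \<open>WL colours: RELABEL is taken to be the (injective) constructor itself.\<close>
datatype 'a wlcol = Init 'a | Step "'a wlcol" "'a wlcol multiset"

fun wl :: "nat \<Rightarrow> (nat \<Rightarrow> 'a) \<Rightarrow> graph \<Rightarrow> nat \<Rightarrow> nat \<Rightarrow> 'a wlcol" where
  "wl n init G 0 v = Init (init v)"
| "wl n init G (Suc t) v = Step (wl n init G t v)
      (image_mset (\<lambda>u. wl n init G t u) (mset_set {u. u < n \<and> G v u}))"

text \<open>Index set of the concatenated feature vector phi^(T): pairs (round t, colour occurring at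
  round t over G_n).\<close>
definition feat_idx :: "nat \<Rightarrow> (graph \<Rightarrow> nat \<Rightarrow> 'a) \<Rightarrow> nat \<Rightarrow> (nat \<times> 'a wlcol) set" where
  "feat_idx n init T = {(t, wl n (init G) G t v) | t G v. t \<le> T \<and> G \<in> graphs n \<and> v < n}"

definition feat :: "nat \<Rightarrow> (graph \<Rightarrow> nat \<Rightarrow> 'a) \<Rightarrow> graph \<Rightarrow> (nat \<times> 'a wlcol) \<Rightarrow> real" where
  "feat n init G i = real (card {v. v < n \<and> wl n (init G) G (fst i) v = snd i})"

definition norm_feat :: "nat \<Rightarrow> (graph \<Rightarrow> nat \<Rightarrow> 'a) \<Rightarrow> nat \<Rightarrow> graph \<Rightarrow> (nat \<times> 'a wlcol) \<Rightarrow> real" where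
  "norm_feat n init T G i = feat n init G i / sqrt (\<Sum>j\<in>feat_idx n init T. (feat n init G j)\<^sup>2)"

definition lin_sep :: "nat \<Rightarrow> 'i set \<Rightarrow> (graph \<Rightarrow> 'i \<Rightarrow> real) \<Rightarrow> (graph \<Rightarrow> bool) \<Rightarrow> bool" where
  "lin_sep n I x c \<longleftrightarrow> (\<exists>(w :: 'i \<Rightarrow> real) (b :: real). \<forall>G\<in>graphs n.
      (c G \<longrightarrow> (\<Sum>i\<in>I. w i * x G i) + b > 0) \<and> (\<not> c G \<longrightarrow> (\<Sum>i\<in>I. w i * x G i) + b < 0))"

definition wl_init :: "graph \<Rightarrow> nat \<Rightarrow> unit" where
  "wl_init G v = ()"

definition wlF_init :: "(nat \<times> graph) set \<Rightarrow> nat \<Rightarrow> graph \<Rightarrow> nat \<Rightarrow> (nat \<times> graph) \<Rightarrow> bool" where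
  "wlF_init Fam n G v = sub_label Fam n G v"

end

theory Submission
  imports Defs
begin

text \<open>With the subgraph labels, the concept is decided already at round 0: \<open>c G\<close> holds iff
  every vertex of \<open>G\<close> carries the all-false label \<open>z\<close>. Give weight 1 to the round-0 colour
  \<open>Init z\<close>, weight \<open>-n\<close> to every other round-0 colour and 0 to all later rounds. The score is
  then \<open>n\<close> if \<open>c G\<close> holds, and at most \<open>(n - 1) - n\<close> otherwise, since some vertex has another
  colour. Normalisation divides the score by a positive number, so the sign is kept.\<close>

lemma finite_graphs: "finite (graphs n)"
proof -
  have "graphs n \<subseteq> (\<lambda>S u v. (u, v) \<in> S) ` Pow ({..<n} \<times> {..<n})"
  proof
    fix E assume "E \<in> graphs n"
    then have "{(u, v). E u v} \<in> Pow ({..<n} \<times> {..<n})"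
      by (auto simp: graphs_def wf_graph_def)
    then show "E \<in> (\<lambda>S u v. (u, v) \<in> S) ` Pow ({..<n} \<times> {..<n})"
      by (intro image_eqI[where x = "{(u, v). E u v}"]) auto
  qed
  then show ?thesis
    by (rule finite_subset) simp
qed

lemma finite_feat_idx: "finite (feat_idx n init T)"
proof -
  have "feat_idx n init T \<subseteq> (\<lambda>(t, G, v). (t, wl n (init G) G t v)) ` ({..T} \<times> graphs n \<times> {..<n})"
    unfolding feat_idx_def by force
  then show ?thesis
    by (rule finite_subset) (simp add: finite_graphs)
qed

lemma feat_round0: "feat n init G (0, col) = real (card {v. v < n \<and> Init (init G v) = col})"
  by (simp add: feat_def)

lemma round0_colour_in_feat_idx:
  assumes "G \<in> graphs n" and "v < n"
  shows "(0, Init (init G v)) \<in> feat_idx n init T"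
  unfolding feat_idx_def using assms by force

lemma feat_norm_pos:
  assumes "G \<in> graphs n" and "0 < n"
  shows "0 < sqrt (\<Sum>j\<in>feat_idx n init T. (feat n init G j)\<^sup>2)"
proof -
  let ?j = "(0, Init (init G 0))"
  have "0 < card {v. v < n \<and> Init (init G v) = Init (init G 0)}"
    using \<open>0 < n\<close> by (subst card_gt_0_iff) auto
  then have "0 < (feat n init G ?j)\<^sup>2"
    by (simp add: feat_round0 card_gt_0_iff)
  also have "\<dots> \<le> (\<Sum>j\<in>feat_idx n init T. (feat n init G j)\<^sup>2)"
    using round0_colour_in_feat_idx[OF assms(1) \<open>0 < n\<close>]
    by (intro member_le_sum) (simp_all add: finite_feat_idx)
  finally show ?thesis
    by simp
qed

lemma lin_sep_divide_pos:
  assumes "\<And>G. G \<in> graphs n \<Longrightarrow> 0 < s G"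
    and "\<And>G. G \<in> graphs n \<Longrightarrow>
      (c G \<longrightarrow> 0 < (\<Sum>i\<in>I. w i * x G i)) \<and> (\<not> c G \<longrightarrow> (\<Sum>i\<in>I. w i * x G i) < 0)"
  shows "lin_sep n I (\<lambda>G i. x G i / s G) c"
  unfolding lin_sep_def
proof (intro exI[of _ w] exI[of _ 0] ballI)
  fix G assume "G \<in> graphs n"
  moreover have "(\<Sum>i\<in>I. w i * (x G i / s G)) = (\<Sum>i\<in>I. w i * x G i) / s G"
    by (simp add: sum_divide_distrib)
  ultimately show "(c G \<longrightarrow> 0 < (\<Sum>i\<in>I. w i * (x G i / s G)) + 0) \<and>
      (\<not> c G \<longrightarrow> (\<Sum>i\<in>I. w i * (x G i / s G)) + 0 < 0)"
    using assms by (simp add: divide_pos_pos divide_neg_pos)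
qed

definition uniform_label_weight :: "nat \<Rightarrow> 'a \<Rightarrow> nat \<times> 'a wlcol \<Rightarrow> real" where
  "uniform_label_weight n z i = (if i = (0, Init z) then 1 else if fst i = 0 then - real n else 0)"

lemma uniform_label_score:
  assumes "G \<in> graphs n" and "0 < n" and uniform: "\<forall>v<n. init G v = z"
  shows "(\<Sum>i\<in>feat_idx n init T. uniform_label_weight n z i * feat n init G i) = real n"
proof -
  let ?a = "(0::nat, Init z)"
  have "uniform_label_weight n z i * feat n init G i = (if i = ?a then real n else 0)" for i
  proof (cases "fst i = 0")
    case True
    then obtain col where i: "i = (0, col)"
      by (metis prod.collapse)
    have "{v. v < n \<and> Init (init G v) = col} = (if col = Init z then {..<n} else {})"
      using uniform by auto
    then show ?thesis
      by (simp add: i feat_round0 uniform_label_weight_def)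
  qed (auto simp: uniform_label_weight_def)
  then have "(\<Sum>i\<in>feat_idx n init T. uniform_label_weight n z i * feat n init G i)
      = (\<Sum>i\<in>feat_idx n init T. if i = ?a then real n else 0)"
    by simp
  also have "\<dots> = real n"
    using round0_colour_in_feat_idx[OF assms(1) \<open>0 < n\<close>, of init T] uniform \<open>0 < n\<close>
    by (simp add: finite_feat_idx)
  finally show ?thesis .
qed

lemma nonuniform_label_score:
  assumes "G \<in> graphs n" and "v0 < n" and "init G v0 \<noteq> z"
  shows "(\<Sum>i\<in>feat_idx n init T. uniform_label_weight n z i * feat n init G i) < 0"
proof -
  let ?a = "(0::nat, Init z)" and ?b = "(0::nat, Init (init G v0))"
  let ?I = "feat_idx n init T"
  have ab: "?a \<noteq> ?b"
    using assms(3) by simp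
  define h where "h i = (if i = ?a then real n - 1 else 0) + (if i = ?b then - real n else 0)" for i
  have "uniform_label_weight n z i * feat n init G i \<le> h i" for i
  proof -
    consider "i = ?a" | "i = ?b" | "i \<noteq> ?a" "i \<noteq> ?b"
      by blast
    then show ?thesis
    proof cases
      case 1
      have "card {v. v < n \<and> init G v = z} \<le> card ({..<n} - {v0})"
        using assms(3) by (intro card_mono) auto
      then show ?thesis
        using 1 ab \<open>v0 < n\<close> by (simp add: feat_round0 uniform_label_weight_def h_def)
    next
      case 2
      have "0 < card {v. v < n \<and> init G v = init G v0}"
        using \<open>v0 < n\<close> by (auto simp: card_gt_0_iff)
      then have "real n * 1 \<le> real n * card {v. v < n \<and> init G v = init G v0}"
        by (intro mult_left_mono) auto
      then show ?thesis
        using 2 ab by (simp add: feat_round0 uniform_label_weight_def h_def)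
    next
      case 3
      then show ?thesis
        by (simp add: uniform_label_weight_def h_def feat_def)
    qed
  qed
  then have "(\<Sum>i\<in>?I. uniform_label_weight n z i * feat n init G i) \<le> (\<Sum>i\<in>?I. h i)"
    by (rule sum_mono)
  also have "\<dots> = (if ?a \<in> ?I then real n - 1 else 0) - real n"
    using round0_colour_in_feat_idx[OF assms(1,2), of init T]
    by (simp add: h_def sum.distrib finite_feat_idx)
  also have "\<dots> < 0"
    using \<open>v0 < n\<close> by simp
  finally show ?thesis .
qed

lemma lin_sep_norm_feat_uniform_label:
  assumes "0 < n"
    and "\<And>G. G \<in> graphs n \<Longrightarrow> c G \<longleftrightarrow> (\<forall>v<n. init G v = z)"
  shows "lin_sep n (feat_idx n init T) (norm_feat n init T) c"
  unfolding norm_feat_def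
proof (rule lin_sep_divide_pos[where w = "uniform_label_weight n z"])
  fix G assume G: "G \<in> graphs n"
  show "0 < sqrt (\<Sum>j\<in>feat_idx n init T. (feat n init G j)\<^sup>2)"
    using feat_norm_pos[OF G \<open>0 < n\<close>] .
  show "(c G \<longrightarrow> 0 < (\<Sum>i\<in>feat_idx n init T. uniform_label_weight n z i * feat n init G i)) \<and>
      (\<not> c G \<longrightarrow> (\<Sum>i\<in>feat_idx n init T. uniform_label_weight n z i * feat n init G i) < 0)"
  proof (intro conjI impI)
    assume "c G"
    then have uniform: "\<forall>v<n. init G v = z"
      using assms(2)[OF G] by simp
    show "0 < (\<Sum>i\<in>feat_idx n init T. uniform_label_weight n z i * feat n init G i)"
      using uniform_label_score[where init = init, OF G \<open>0 < n\<close> uniform] \<open>0 < n\<close> by simp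
  next
    assume "\<not> c G"
    then obtain v0 where "v0 < n" and "init G v0 \<noteq> z"
      using assms(2)[OF G] by auto
    then show "(\<Sum>i\<in>feat_idx n init T. uniform_label_weight n z i * feat n init G i) < 0"
      by (rule nonuniform_label_score[OF G])
  qed
qed

theorem proposition13:
  fixes n :: nat and Fam :: "(nat \<times> graph) set" and c :: "graph \<Rightarrow> bool"
  assumes "n \<ge> 6"
    and "finite Fam" and "\<forall>F\<in>Fam. wf_graph (fst F) (snd F)"
    and "\<forall>G\<in>graphs n. \<forall>H\<in>graphs n. graph_iso n G H \<longrightarrow> c G = c H"
    and "\<forall>T. \<not> lin_sep n (feat_idx n wl_init T) (norm_feat n wl_init T) c"
    and "\<forall>G\<in>graphs n. \<not> c G \<longrightarrow> (\<exists>v<n. \<exists>F\<in>Fam. in_induced_copy (fst F) (snd F) n G v)"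
    and "\<forall>G\<in>graphs n. c G \<longrightarrow> \<not> (\<exists>v<n. \<exists>F\<in>Fam. in_induced_copy (fst F) (snd F) n G v)"
  shows "\<forall>T. lin_sep n (feat_idx n (wlF_init Fam n) T) (norm_feat n (wlF_init Fam n) T) c"
proof
  fix T
  have "wlF_init Fam n G v = (\<lambda>_. False) \<longleftrightarrow>
      \<not> (\<exists>F\<in>Fam. in_induced_copy (fst F) (snd F) n G v)" for G v
    by (auto simp: wlF_init_def sub_label_def fun_eq_iff)
  then have "c G \<longleftrightarrow> (\<forall>v<n. wlF_init Fam n G v = (\<lambda>_. False))" if "G \<in> graphs n" for G
    using assms(6,7) that by blast
  then show "lin_sep n (feat_idx n (wlF_init Fam n) T) (norm_feat n (wlF_init Fam n) T) c"
    using assms(1) by (intro lin_sep_norm_feat_uniform_label) auto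
qed

end
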